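(* In the sleeping multi-armed bandit setting, let $(\ell_t)_{t=1}^T$ be an arbitrary deterministic sequence of loss vectors in $[0,1]^K$ fixed in advance (oblivious adversary), and let $(S_t)_{t\ge1}$ be i.i.d. random nonempty subsets of $[K]$ (independent of the learner's internal randomness at the same round). Then for any algorithm, $$\max_{\pi}R_T^{\mathrm{policy}}(\pi)=\max_{\sigma}\mathbb E\big[R_T^{\mathrm{ordering}}(\sigma)\big],$$ where $\pi$ ranges over all policies and $\sigma$ over all orderings of $[K]$.
   Context: Sleeping multi-armed bandit setting: $K$ arms $[K]$. At each round $t$ a nonempty availability set $S_t\subseteq[K]$ is revealed, the learner (possibly randomized) selects $k_t\in S_t$ and observes $\ell_t(k_t)$. An ordering is a permutation $\sigma=(\sigma_1,\dots,\sigma_K)$ of $[K]$; for nonempty $S\subseteq[K]$, $\sigma(S)=\sigma_m$ with $m=\min\{i:\sigma_i\in S\}$. Ordering regret: $R_T^{\mathrm{ordering}}(\sigma)=\sum_{t=1}^T\big(\ell_t(k_t)-\ell_t(\sigma(S_t))\big)$. A policy is a map $\pi$ from nonempty subsets of $[K]$ to $[K]$ with $\pi(S)\in S$. Policy regret: $R_T^{\mathrm{policy}}(\pi)=\mathbb E\big[\sum_{t=1}^T\ell_t(k_t)-\sum_{t=1}^T\ell_t(\pi(S_t))\big]$, the expectation being over availabilities and the learner's randomness. *)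

theory Defs
  imports "HOL-Probability.Probability" "HOL-Combinatorics.Multiset_Permutations"
begin

text \<open>Arms are the natural numbers 1..K. A round record is (S_t, k_t, observed loss).
  A history is the list of round records of the rounds played so far.\<close>

type_synonym history = "(nat set \<times> nat \<times> real) list"

definition avail_sets :: "nat \<Rightarrow> nat set set" where
  "avail_sets K = {S. S \<subseteq> {1..K} \<and> S \<noteq> {}}"

text \<open>Policies: maps from nonempty subsets of [K] to arms with pi(S) in S
  (extensional outside the relevant domain, so that there are finitely many).\<close>
definition policies :: "nat \<Rightarrow> (nat set \<Rightarrow> nat) set" where
  "policies K = (\<Pi>\<^sub>E S\<in>avail_sets K. S)"

text \<open>Orderings are permutations (lists) of [K]; sigma(S) is the first element of sigma lying in S.\<close>
definition ord_select :: "nat list \<Rightarrow> nat set \<Rightarrow> nat" where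
  "ord_select \<sigma> S = \<sigma> ! (LEAST i. i < length \<sigma> \<and> \<sigma> ! i \<in> S)"

text \<open>D is the distribution of each S_t (drawn i.i.d.);
  A h S is the (randomized) choice of the learner given the history h and the
  current availability set S; l t k is the loss of arm k at round t (oblivious).
  traj n is the distribution of the history after n rounds.\<close>
fun traj :: "nat set pmf \<Rightarrow> (history \<Rightarrow> nat set \<Rightarrow> nat pmf) \<Rightarrow> (nat \<Rightarrow> nat \<Rightarrow> real)
             \<Rightarrow> nat \<Rightarrow> history pmf" where
  "traj D A l 0 = return_pmf []"
| "traj D A l (Suc n) =
     bind_pmf (traj D A l n) (\<lambda>h. bind_pmf D (\<lambda>S. bind_pmf (A h S) (\<lambda>k.
        return_pmf (h @ [(S, k, l (Suc n) k)]))))"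

text \<open>S_t and k_t (t = 1..T) read off a history (0-indexed list).\<close>
definition avail_at :: "history \<Rightarrow> nat \<Rightarrow> nat set" where
  "avail_at h t = fst (h ! (t - 1))"

definition chosen_at :: "history \<Rightarrow> nat \<Rightarrow> nat" where
  "chosen_at h t = fst (snd (h ! (t - 1)))"

definition ordering_regret :: "(nat \<Rightarrow> nat \<Rightarrow> real) \<Rightarrow> nat \<Rightarrow> history \<Rightarrow> nat list \<Rightarrow> real" where
  "ordering_regret l T h \<sigma> =
     (\<Sum>t=1..T. l t (chosen_at h t) - l t (ord_select \<sigma> (avail_at h t)))"

definition policy_regret :: "nat set pmf \<Rightarrow> (history \<Rightarrow> nat set \<Rightarrow> nat pmf) \<Rightarrow> (nat \<Rightarrow> nat \<Rightarrow> real)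
      \<Rightarrow> nat \<Rightarrow> (nat set \<Rightarrow> nat) \<Rightarrow> real" where
  "policy_regret D A l T \<pi> =
     measure_pmf.expectation (traj D A l T)
       (\<lambda>h. (\<Sum>t=1..T. l t (chosen_at h t)) - (\<Sum>t=1..T. l t (\<pi> (avail_at h t))))"

end

theory Submission
  imports Defs
begin

text \<open>Since the availability sets are i.i.d.\ and the losses are oblivious, each \<open>S\<^sub>t\<close> is
  distributed as \<open>D\<close> whatever the learner does. Hence, for any comparator map \<open>f\<close> from
  availability sets to arms, the expected regret against \<open>f\<close> is the learner's expected loss
  minus \<open>\<integral> L (f S) dD(S)\<close>, where \<open>L k = \<Sum>\<^sub>t l t k\<close> is the cumulative loss of arm \<open>k\<close>.
  An ordering \<open>\<sigma>\<close> is such a comparator (namely \<open>\<sigma>(\<cdot>)\<close>, a policy on the support of \<open>D\<close>), and the ordering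
  that sorts the arms by \<open>L\<close> picks on every \<open>S\<close> an arm of minimal \<open>L\<close>, so it is at least as good
  as every policy.\<close>

lemma traj_length: "h \<in> set_pmf (traj D A l n) \<Longrightarrow> length h = n"
  by (induction n arbitrary: h) auto

lemma finite_set_pmf_traj:
  assumes "finite (set_pmf D)" "\<And>h S. S \<in> set_pmf D \<Longrightarrow> finite (set_pmf (A h S))"
  shows "finite (set_pmf (traj D A l n))"
  by (induction n) (auto simp: assms)

lemma map_pmf_avail_at_traj:
  assumes "1 \<le> t" "t \<le> n"
  shows "map_pmf (\<lambda>h. avail_at h t) (traj D A l n) = D"
  using assms
proof (induction n)
  case 0
  then show ?case by simp
next
  case (Suc n)
  have unfold: "map_pmf (\<lambda>h. avail_at h t) (traj D A l (Suc n)) =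
     bind_pmf (traj D A l n) (\<lambda>h. bind_pmf D (\<lambda>S. bind_pmf (A h S) (\<lambda>k.
        return_pmf (avail_at (h @ [(S, k, l (Suc n) k)]) t))))"
    by (simp add: map_bind_pmf map_return_pmf)
  show ?case
  proof (cases "t \<le> n")
    case True
    then have "t - 1 < n" using Suc.prems by simp
    then have "map_pmf (\<lambda>h. avail_at h t) (traj D A l (Suc n)) =
        bind_pmf (traj D A l n) (\<lambda>h. return_pmf (avail_at h t))"
      unfolding unfold
      by (intro bind_pmf_cong refl)
        (auto simp: avail_at_def nth_append dest!: traj_length intro!: bind_pmf_const[symmetric])
    also have "\<dots> = D" using Suc True by (simp flip: map_pmf_def)
    finally show ?thesis .
  next
    case False
    then have "t = Suc n" using Suc.prems by simp
    then have "map_pmf (\<lambda>h. avail_at h t) (traj D A l (Suc n)) =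
        bind_pmf (traj D A l n) (\<lambda>h. bind_pmf D (\<lambda>S. bind_pmf (A h S) (\<lambda>k. return_pmf S)))"
      unfolding unfold
      by (intro bind_pmf_cong refl) (auto simp: avail_at_def nth_append dest: traj_length)
    also have "\<dots> = D" by (simp add: bind_return_pmf')
    finally show ?thesis .
  qed
qed

lemma policy_regret_eq_expected_loss_diff:
  assumes "finite (set_pmf D)" "finite (set_pmf (traj D A l T))"
  shows "policy_regret D A l T f =
      measure_pmf.expectation (traj D A l T) (\<lambda>h. \<Sum>t=1..T. l t (chosen_at h t))
      - measure_pmf.expectation D (\<lambda>S. \<Sum>t=1..T. l t (f S))"
proof -
  let ?P = "traj D A l T"
  have "measure_pmf.expectation ?P (\<lambda>h. \<Sum>t=1..T. l t (f (avail_at h t)))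
      = (\<Sum>t=1..T. measure_pmf.expectation ?P (\<lambda>h. l t (f (avail_at h t))))"
    by (rule Bochner_Integration.integral_sum) (auto intro: integrable_measure_pmf_finite[OF assms(2)])
  also have "\<dots> = (\<Sum>t=1..T. measure_pmf.expectation D (\<lambda>S. l t (f S)))"
  proof (intro sum.cong refl)
    fix t assume "t \<in> {1..T}"
    then have "measure_pmf.expectation ?P (\<lambda>h. l t (f (avail_at h t)))
        = measure_pmf.expectation (map_pmf (\<lambda>h. avail_at h t) ?P) (\<lambda>S. l t (f S))"
      by simp
    also have "map_pmf (\<lambda>h. avail_at h t) ?P = D"
      using \<open>t \<in> {1..T}\<close> by (intro map_pmf_avail_at_traj) auto
    finally show "measure_pmf.expectation ?P (\<lambda>h. l t (f (avail_at h t)))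
        = measure_pmf.expectation D (\<lambda>S. l t (f S))" .
  qed
  also have "\<dots> = measure_pmf.expectation D (\<lambda>S. \<Sum>t=1..T. l t (f S))"
    by (rule Bochner_Integration.integral_sum[symmetric])
      (auto intro: integrable_measure_pmf_finite[OF assms(1)])
  finally show ?thesis
    unfolding policy_regret_def
    by (subst Bochner_Integration.integral_diff)
      (auto intro: integrable_measure_pmf_finite[OF assms(2)])
qed

lemma policy_regret_mono:
  assumes "finite (set_pmf D)" "finite (set_pmf (traj D A l T))"
    and "\<And>S. S \<in> set_pmf D \<Longrightarrow> (\<Sum>t=1..T. l t (g S)) \<le> (\<Sum>t=1..T. l t (f S))"
  shows "policy_regret D A l T f \<le> policy_regret D A l T g"
proof -
  have "measure_pmf.expectation D (\<lambda>S. \<Sum>t=1..T. l t (g S))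
      \<le> measure_pmf.expectation D (\<lambda>S. \<Sum>t=1..T. l t (f S))"
    by (intro integral_mono_AE AE_pmfI assms(3) integrable_measure_pmf_finite[OF assms(1)])
  then show ?thesis by (simp add: policy_regret_eq_expected_loss_diff[OF assms(1,2)])
qed

lemma expected_ordering_regret_eq_policy_regret:
  "measure_pmf.expectation (traj D A l T) (\<lambda>h. ordering_regret l T h \<sigma>)
     = policy_regret D A l T (ord_select \<sigma>)"
  unfolding ordering_regret_def policy_regret_def sum_subtractf ..

lemma ord_select_in:
  assumes "S \<subseteq> set \<sigma>" "S \<noteq> {}"
  shows "ord_select \<sigma> S \<in> S"
proof -
  have "\<exists>i. i < length \<sigma> \<and> \<sigma> ! i \<in> S"
    using assms by (fastforce simp: in_set_conv_nth)
  then show ?thesis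
    unfolding ord_select_def by (metis (mono_tags, lifting) LeastI_ex)
qed

lemma ord_select_le_if_sorted:
  fixes L :: "nat \<Rightarrow> 'a :: linorder"
  assumes "sorted (map L \<sigma>)" "k \<in> S" "k \<in> set \<sigma>"
  shows "L (ord_select \<sigma> S) \<le> L k"
proof -
  obtain j where j: "j < length \<sigma>" "\<sigma> ! j = k" using assms(3) by (auto simp: in_set_conv_nth)
  let ?i = "LEAST i. i < length \<sigma> \<and> \<sigma> ! i \<in> S"
  have "?i \<le> j" by (rule Least_le) (use j assms(2) in auto)
  then have "map L \<sigma> ! ?i \<le> map L \<sigma> ! j"
    using j by (intro sorted_nth_mono[OF assms(1)]) auto
  then show ?thesis using \<open>?i \<le> j\<close> j unfolding ord_select_def by simp
qed

lemma finite_avail_sets: "finite (avail_sets K)"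
  by (rule finite_subset[of _ "Pow {1..K}"]) (auto simp: avail_sets_def)

lemma finite_policies: "finite (policies K)"
  unfolding policies_def
  by (rule finite_PiE[OF finite_avail_sets]) (auto simp: avail_sets_def intro: finite_subset)

lemma finite_set_pmf_traj_if_valid:
  assumes "set_pmf D \<subseteq> avail_sets K" "\<And>h S. S \<in> avail_sets K \<Longrightarrow> set_pmf (A h S) \<subseteq> S"
  shows "finite (set_pmf (traj D A l n))"
proof (rule finite_set_pmf_traj)
  show "finite (set_pmf D)" using assms(1) finite_avail_sets finite_subset by blast
  fix h S assume "S \<in> set_pmf D"
  then have "set_pmf (A h S) \<subseteq> {1..K}"
    using assms(1) assms(2)[of S h] by (auto simp: avail_sets_def)
  then show "finite (set_pmf (A h S))" using finite_subset by blast
qed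

lemma restrict_ord_select_in_policies:
  assumes "\<sigma> \<in> permutations_of_set {1..K}"
  shows "restrict (ord_select \<sigma>) (avail_sets K) \<in> policies K"
proof -
  have "set \<sigma> = {1..K}" using permutations_of_setD(1)[OF assms] .
  then show ?thesis
    using ord_select_in[of _ \<sigma>] by (auto simp: policies_def avail_sets_def restrict_PiE_iff)
qed

lemma sort_key_in_permutations_of_set:
  "sort_key L [1..<K+1] \<in> permutations_of_set {1..K}"
  by (intro permutations_of_setI) auto

lemma Max_eq_Max_if_dominating:
  fixes B :: "'a :: linorder set"
  assumes "finite A" "B \<subseteq> A" "b \<in> B" "\<And>a. a \<in> A \<Longrightarrow> a \<le> b"
  shows "Max A = Max B"
proof -
  have "Max A = b" using assms by (intro Max_eqI) auto
  moreover have "Max B = b" using assms finite_subset[OF assms(2,1)] by (intro Max_eqI) auto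
  ultimately show ?thesis by simp
qed

lemma policy_regret_ord_select_in_policy_regrets:
  assumes "finite (set_pmf D)" "finite (set_pmf (traj D A l T))" "set_pmf D \<subseteq> avail_sets K"
    and "\<sigma> \<in> permutations_of_set {1..K}"
  shows "policy_regret D A l T (ord_select \<sigma>) \<in> policy_regret D A l T ` policies K"
proof -
  let ?\<pi> = "restrict (ord_select \<sigma>) (avail_sets K)"
  have "?\<pi> S = ord_select \<sigma> S" if "S \<in> set_pmf D" for S
    using that assms(3) by auto
  then have "policy_regret D A l T ?\<pi> = policy_regret D A l T (ord_select \<sigma>)"
    by (intro antisym policy_regret_mono[OF assms(1,2)]) simp_all
  then show ?thesis using restrict_ord_select_in_policies[OF assms(4)] by (metis image_eqI)
qed

lemma policy_regret_le_sorted_ordering: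
  assumes "finite (set_pmf D)" "finite (set_pmf (traj D A l T))" "set_pmf D \<subseteq> avail_sets K"
    and "\<pi> \<in> policies K"
  shows "policy_regret D A l T \<pi>
    \<le> policy_regret D A l T (ord_select (sort_key (\<lambda>k. \<Sum>t=1..T. l t k) [1..<K+1]))"
proof (rule policy_regret_mono[OF assms(1,2)])
  fix S assume "S \<in> set_pmf D"
  then have "\<pi> S \<in> S" "S \<subseteq> {1..K}"
    using assms(3,4) by (auto simp: policies_def avail_sets_def)
  then show "(\<Sum>t=1..T. l t (ord_select (sort_key (\<lambda>k. \<Sum>t=1..T. l t k) [1..<K+1]) S))
      \<le> (\<Sum>t=1..T. l t (\<pi> S))"
    by (intro ord_select_le_if_sorted) auto
qed

theorem mainTheorem8:
  fixes K T :: nat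
    and l :: "nat \<Rightarrow> nat \<Rightarrow> real"
    and D :: "nat set pmf"
    and A :: "history \<Rightarrow> nat set \<Rightarrow> nat pmf"
  assumes loss_range: "\<And>t k. t \<in> {1..T} \<Longrightarrow> k \<in> {1..K} \<Longrightarrow> 0 \<le> l t k \<and> l t k \<le> 1"
    and D_support: "set_pmf D \<subseteq> avail_sets K"
    and A_valid: "\<And>h S. S \<in> avail_sets K \<Longrightarrow> set_pmf (A h S) \<subseteq> S"
  shows "Max (policy_regret D A l T ` policies K)
       = Max ((\<lambda>\<sigma>. measure_pmf.expectation (traj D A l T) (\<lambda>h. ordering_regret l T h \<sigma>))
                ` permutations_of_set {1..K})"
proof -
  have fin_D: "finite (set_pmf D)"
    using D_support finite_avail_sets finite_subset by blast
  have fin_traj: "finite (set_pmf (traj D A l T))"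
    using D_support A_valid by (rule finite_set_pmf_traj_if_valid)
  let ?\<sigma>\<^sub>L = "sort_key (\<lambda>k. \<Sum>t=1..T. l t k) [1..<K+1]"
  show ?thesis
    unfolding expected_ordering_regret_eq_policy_regret
  proof (rule Max_eq_Max_if_dominating)
    show "(\<lambda>\<sigma>. policy_regret D A l T (ord_select \<sigma>)) ` permutations_of_set {1..K}
        \<subseteq> policy_regret D A l T ` policies K"
      using policy_regret_ord_select_in_policy_regrets[OF fin_D fin_traj D_support] by blast
    show "policy_regret D A l T (ord_select ?\<sigma>\<^sub>L)
        \<in> (\<lambda>\<sigma>. policy_regret D A l T (ord_select \<sigma>)) ` permutations_of_set {1..K}"
      using sort_key_in_permutations_of_set by blast
    show "a \<le> policy_regret D A l T (ord_select ?\<sigma>\<^sub>L)"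
      if "a \<in> policy_regret D A l T ` policies K" for a
      using that policy_regret_le_sorted_ordering[OF fin_D fin_traj D_support] by blast
  qed (simp add: finite_policies)
qed

end
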